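(* Fix $K\ge 2$, a prior concentration vector $\alpha\in\mathbb{R}_{+}^{K}$ (all entries positive), a temperature $\nu>0$, and observed data $(Y_1,X_1),\dots,(Y_n,X_n)$ with $Y_i\in\{1,\dots,K\}$ and $X_i\in\mathbb{R}^d$. Let $\{\mathrm{NN}^{\phi}:\mathbb{R}^d\to\mathbb{R}_{+}^{K}\}_{\phi\in\Phi}$ be a family of neural networks and, for $\phi\in\Phi$, let $q^{\phi}_{X_{1:n}}=\prod_{i=1}^n q^{\phi}_{X_i}$ with $q^{\phi}_{X_i}=\mathrm{Dir}(\alpha+\mathrm{NN}^{\phi}(X_i))$ be the mean-field variational distribution on $(\Delta^{K-1})^n$. Let $\pi^{\nu}_{Y_{1:n}}$ be the tempered pseudo-posterior of the tempered independent categorical–Dirichlet model (defined in the context). Then for $\phi\in\Phi$, $$\widehat{\phi}\in\arg\min_{\phi\in\Phi}\mathrm{KL}\big(q^{\phi}_{X_{1:n}}\,\|\,\pi^{\nu}_{Y_{1:n}}\big)\quad\Longleftrightarrow\quad \widehat{\phi}\in\arg\min_{\phi\in\Phi}\mathcal{L}^{1/\nu}_{\mathrm{EDL}}(\phi;Y_{1:n},X_{1:n}),$$ i.e. amortized variational inference for the tempered model is equivalent to training an EDL model with regularization parameter $\lambda=1/\nu$.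
   Context: $\Delta^{K-1}$ is the probability simplex in $\mathbb{R}^K$; $\mathrm{Cat}(p)$ is the categorical distribution with $\mathbb{P}(Y=k)=p(k)$, and $f_p(y)=\prod_{k=1}^K p(k)^{\mathbb{I}(y=k)}=p(y)$ its probability mass function; $\mathrm{Dir}(\beta)$ is the Dirichlet distribution on $\Delta^{K-1}$ with concentration $\beta\in\mathbb{R}_+^K$; $\pi=\mathrm{Dir}(\alpha)$. Tempered independent categorical–Dirichlet model: the class-probability vectors $p_1,\dots,p_n$ are i.i.d. with prior $\pi$, and the (unnormalized) pseudo-likelihood of $Y_i$ given $p_i$ is $f_{p_i}(Y_i)^{\nu}$; the tempered pseudo-posterior $\pi^{\nu}_{Y_{1:n}}$ is the probability density on $(\Delta^{K-1})^n$ proportional to $\prod_{i=1}^n f_{p_i}(Y_i)^{\nu}\,\pi(p_i)$. The EDL loss with regularization parameter $\lambda>0$ is $$\mathcal{L}^{\lambda}_{\mathrm{EDL}}(\phi;Y_{1:n},X_{1:n})=\sum_{i=1}^n -\mathbb{E}_{p_i\sim\mathrm{Dir}(\alpha+\mathrm{NN}^{\phi}(X_i))}\big[\log \mathrm{Cat}(Y_i\mid p_i)\big]+\lambda\sum_{i=1}^n\mathrm{KL}\big(\mathrm{Dir}(\alpha+\mathrm{NN}^{\phi}(X_i))\,\|\,\mathrm{Dir}(\alpha)\big).$$ *)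

theory Defs
  imports "HOL-Probability.Probability"
begin

text \<open>Classes are indexed 0,...,K-1; a point of the simplex is a function nat => real
  (extensional outside {..<K}).\<close>

text \<open>Reference measure on the simplex: Lebesgue measure on the first K-1 coordinates
  (restricted to the corner region), pushed forward to the full K-vector.\<close>
definition simplex_coords :: "nat \<Rightarrow> (nat \<Rightarrow> real) \<Rightarrow> (nat \<Rightarrow> real)" where
  "simplex_coords K x = (\<lambda>j. if j < K - 1 then x j
                              else if j = K - 1 then 1 - (\<Sum>i<K - 1. x i) else undefined)"

definition simplex_measure :: "nat \<Rightarrow> (nat \<Rightarrow> real) measure" where
  "simplex_measure K =
     distr (restrict_space (PiM {..<K - 1} (\<lambda>_. lborel))
              {x. (\<forall>i<K - 1. 0 \<le> x i) \<and> (\<Sum>i<K - 1. x i) \<le> 1})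
           (PiM {..<K} (\<lambda>_. borel)) (simplex_coords K)"

definition dir_density :: "nat \<Rightarrow> (nat \<Rightarrow> real) \<Rightarrow> (nat \<Rightarrow> real) \<Rightarrow> real" where
  "dir_density K \<beta> p =
     Gamma (\<Sum>k<K. \<beta> k) / (\<Prod>k<K. Gamma (\<beta> k)) * (\<Prod>k<K. p k powr (\<beta> k - 1))"

definition Dirichlet :: "nat \<Rightarrow> (nat \<Rightarrow> real) \<Rightarrow> (nat \<Rightarrow> real) measure" where
  "Dirichlet K \<beta> = density (simplex_measure K) (\<lambda>p. ennreal (dir_density K \<beta> p))"

definition cat_pmf :: "nat \<Rightarrow> (nat \<Rightarrow> real) \<Rightarrow> nat \<Rightarrow> real" where
  "cat_pmf K p y = (\<Prod>k<K. p k ^ (if y = k then 1 else 0))"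

text \<open>KL(Q || P) = integral of ln (dQ/dP) dQ (library KL_divergence with base e; note the
  library argument order KL_divergence b P Q = KL(Q || P)).\<close>
definition KL :: "'a measure \<Rightarrow> 'a measure \<Rightarrow> real" where
  "KL Q P = KL_divergence (exp 1) P Q"

definition tempered_posterior ::
  "nat \<Rightarrow> (nat \<Rightarrow> real) \<Rightarrow> real \<Rightarrow> nat \<Rightarrow> (nat \<Rightarrow> nat) \<Rightarrow> (nat \<Rightarrow> nat \<Rightarrow> real) measure" where
  "tempered_posterior K \<alpha> \<nu> n Y =
     (let base = PiM {..<n} (\<lambda>_. simplex_measure K);
          u = (\<lambda>P. ennreal (\<Prod>i<n. cat_pmf K (P i) (Y i) powr \<nu> * dir_density K \<alpha> (P i)))
      in density base (\<lambda>P. u P / (\<integral>\<^sup>+ P'. u P' \<partial>base)))"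

definition mean_field ::
  "nat \<Rightarrow> (nat \<Rightarrow> real) \<Rightarrow> ('phi \<Rightarrow> 'x \<Rightarrow> nat \<Rightarrow> real) \<Rightarrow> nat \<Rightarrow> (nat \<Rightarrow> 'x) \<Rightarrow> 'phi
     \<Rightarrow> (nat \<Rightarrow> nat \<Rightarrow> real) measure" where
  "mean_field K \<alpha> NN n X \<phi> = PiM {..<n} (\<lambda>i. Dirichlet K (\<lambda>k. \<alpha> k + NN \<phi> (X i) k))"

definition edl_loss ::
  "nat \<Rightarrow> (nat \<Rightarrow> real) \<Rightarrow> ('phi \<Rightarrow> 'x \<Rightarrow> nat \<Rightarrow> real) \<Rightarrow> real \<Rightarrow> nat \<Rightarrow> (nat \<Rightarrow> nat)
     \<Rightarrow> (nat \<Rightarrow> 'x) \<Rightarrow> 'phi \<Rightarrow> real" where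
  "edl_loss K \<alpha> NN lam n Y X \<phi> =
     (\<Sum>i<n. - (\<integral>p. ln (cat_pmf K p (Y i)) \<partial>Dirichlet K (\<lambda>k. \<alpha> k + NN \<phi> (X i) k)))
     + lam * (\<Sum>i<n. KL (Dirichlet K (\<lambda>k. \<alpha> k + NN \<phi> (X i) k)) (Dirichlet K \<alpha>))"

end

(* Conjugacy does all the work.  Tempering a categorical likelihood tilts a Dirichlet prior
   within its family, p_y^nu Dir(alpha)(p) = z_y Dir(alpha + nu e_y)(p), so the tempered
   pseudo-posterior is the product of the Dirichlet laws Dir(alpha + nu e_(Y_i)).  Between
   products of Dirichlet laws the KL divergence is the sum of the coordinatewise ones, and
   KL(q || Dir(alpha + nu e_y)) = KL(q || Dir alpha) - nu E_q[ln p_y] + ln z_y.  Summing over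
   the data gives KL(q^phi || pi^nu) = nu * L_EDL^(1/nu)(phi) + const with nu > 0, so both
   sides have the same minimisers.
   Underneath lie the normalisation of the Dirichlet density (the Dirichlet integral, computed
   by integrating out one coordinate at a time against a Beta integral) and the integrability
   of ln p_k under a Dirichlet law, which follows from |ln x| <= (x^e + x^-e) / e and the same
   tilting identity. *)

theory Submission
  imports Defs
begin

section \<open>The Dirichlet integral\<close>

definition simplex_corner :: "nat \<Rightarrow> (nat \<Rightarrow> real) set" where
  "simplex_corner m = {x. (\<forall>i<m. 0 \<le> x i) \<and> (\<Sum>i<m. x i) \<le> 1}"

definition dirichlet_kernel :: "nat \<Rightarrow> (nat \<Rightarrow> real) \<Rightarrow> real \<Rightarrow> (nat \<Rightarrow> real) \<Rightarrow> real" where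
  "dirichlet_kernel m a b x = (\<Prod>k<m. x k powr (a k - 1)) * (1 - (\<Sum>k<m. x k)) powr (b - 1)"

lemma borel_measurable_dirichlet_kernel_corner:
  "(\<lambda>x. ennreal (dirichlet_kernel m a b x) * indicator (simplex_corner m) x)
     \<in> borel_measurable (PiM {..<m} (\<lambda>_. lborel))"
  unfolding dirichlet_kernel_def simplex_corner_def by (intro borel_measurable_times_ennreal) measurable

lemma Beta_real_pos: "a > 0 \<Longrightarrow> b > 0 \<Longrightarrow> Beta a b > (0::real)"
  by (simp add: Beta_def)

lemma nn_integral_beta_kernel_scaled:
  fixes a b t :: real
  assumes a: "a > 0" and b: "b > 0"
  shows "(\<integral>\<^sup>+y. ennreal (y powr (a - 1) * (t - y) powr (b - 1)) * indicator {0..t} y \<partial>lborel)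
       = ennreal (t powr (a + b - 1) * Beta a b) * indicator {0..} t"
proof (cases "t > 0")
  case True
  have rescale: "ennreal ((t * u) powr (a - 1) * (t - t * u) powr (b - 1)) * indicator {0..t} (t * u)
      = ennreal (t powr (a + b - 2)) * (ennreal (u powr (a - 1) * (1 - u) powr (b - 1)) * indicator {0..1} u)"
    for u
  proof (cases "u \<in> {0..1}")
    case True
    have "t - t * u = t * (1 - u)" by (simp add: algebra_simps)
    then have "(t * u) powr (a - 1) * (t - t * u) powr (b - 1)
             = t powr (a + b - 2) * (u powr (a - 1) * (1 - u) powr (b - 1))"
      using True \<open>t > 0\<close> by (simp add: powr_mult powr_add[symmetric] mult_ac)
    moreover have "t * u \<in> {0..t}" using True \<open>t > 0\<close> by (auto simp: mult_le_cancel_left1)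
    ultimately show ?thesis using True by (simp add: ennreal_mult)
  next
    case False
    then have "t * u \<notin> {0..t}" using \<open>t > 0\<close> by (auto simp: zero_le_mult_iff mult_le_cancel_left1)
    then show ?thesis using False by simp
  qed
  have "(\<integral>\<^sup>+y. ennreal (y powr (a - 1) * (t - y) powr (b - 1)) * indicator {0..t} y \<partial>lborel)
      = ennreal t * (\<integral>\<^sup>+u. ennreal ((t * u) powr (a - 1) * (t - t * u) powr (b - 1))
                              * indicator {0..t} (t * u) \<partial>lborel)"
    using True
      nn_integral_real_affine[where c = t and t = 0,
        of "\<lambda>y. ennreal (y powr (a - 1) * (t - y) powr (b - 1)) * indicator {0..t} y"]
    by simp
  also have "\<dots> = ennreal t * (ennreal (t powr (a + b - 2)) * ennreal (Beta a b))"
    unfolding rescale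
    by (subst nn_integral_cmult)
       (auto simp: nn_integral_has_integral_lebesgue'[OF _ has_integral_Beta_real[OF a b]])
  also have "\<dots> = ennreal (t powr (a + b - 1) * Beta a b)"
  proof -
    have "t * t powr (a + b - 2) = t powr (a + b - 1)"
      using True by (simp add: powr_add[symmetric] powr_mult_base)
    then show ?thesis
      using True Beta_real_pos[OF a b] by (simp add: ennreal_mult[symmetric] mult.assoc[symmetric])
  qed
  finally show ?thesis using True by simp
next
  case False
  have vanish: "(\<lambda>y. ennreal (y powr (a - 1) * (t - y) powr (b - 1)) * indicator {0..t} y) = (\<lambda>_. 0)"
  proof
    fix y
    show "ennreal (y powr (a - 1) * (t - y) powr (b - 1)) * indicator {0..t} y = 0"
      using False by (cases "y \<in> {0..t}") auto
  qed
  show ?thesis unfolding vanish using False by (auto simp: indicator_def)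
qed

lemma dirichlet_kernel_fun_upd_last:
  "dirichlet_kernel (Suc m) a b (x(m := y))
     = (\<Prod>k<m. x k powr (a k - 1)) * (y powr (a m - 1) * (1 - (\<Sum>k<m. x k) - y) powr (b - 1))"
proof -
  have "(\<Prod>k<m. (x(m := y)) k powr (a k - 1)) = (\<Prod>k<m. x k powr (a k - 1))"
    and "(\<Sum>k<m. (x(m := y)) k) = (\<Sum>k<m. x k)"
    by (auto intro!: prod.cong sum.cong)
  then show ?thesis
    by (simp add: dirichlet_kernel_def diff_diff_eq mult.assoc)
qed

lemma fun_upd_last_in_simplex_corner:
  "x(m := y) \<in> simplex_corner (Suc m) \<longleftrightarrow> (\<forall>i<m. 0 \<le> x i) \<and> y \<in> {0..1 - (\<Sum>k<m. x k)}"
proof -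
  have "(\<Sum>k<m. (x(m := y)) k) = (\<Sum>k<m. x k)"
    by (auto intro!: sum.cong)
  then show ?thesis
    by (auto simp: simplex_corner_def less_Suc_eq)
qed

lemma nn_integral_dirichlet_kernel_last:
  fixes a :: "nat \<Rightarrow> real" and b :: real and x :: "nat \<Rightarrow> real"
  assumes am: "a m > 0" and b: "b > 0"
  shows "(\<integral>\<^sup>+y. ennreal (dirichlet_kernel (Suc m) a b (x(m := y)))
                 * indicator (simplex_corner (Suc m)) (x(m := y)) \<partial>lborel)
       = ennreal (Beta (a m) b)
         * (ennreal (dirichlet_kernel m a (a m + b) x) * indicator (simplex_corner m) x)"
proof -
  define t where "t = 1 - (\<Sum>k<m. x k)"
  define P where "P = (\<Prod>k<m. x k powr (a k - 1))"
  define C where "C = (indicator {x. \<forall>i<m. 0 \<le> x i} x :: ennreal)"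
  have P: "P \<ge> 0" unfolding P_def by (simp add: prod_nonneg)
  have "(\<integral>\<^sup>+y. ennreal (dirichlet_kernel (Suc m) a b (x(m := y)))
                 * indicator (simplex_corner (Suc m)) (x(m := y)) \<partial>lborel)
      = (\<integral>\<^sup>+y. ennreal P * C * (ennreal (y powr (a m - 1) * (t - y) powr (b - 1)) * indicator {0..t} y)
           \<partial>lborel)"
    using P
    by (intro nn_integral_cong)
       (auto simp: dirichlet_kernel_fun_upd_last fun_upd_last_in_simplex_corner indicator_def
                   C_def P_def t_def ennreal_mult)
  also have "\<dots> = ennreal P * C * (ennreal (t powr (a m + b - 1) * Beta (a m) b) * indicator {0..} t)"
    by (subst nn_integral_cmult)
       (simp_all add: nn_integral_beta_kernel_scaled[OF am b] borel_measurable_times_ennreal)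
  also have "\<dots> = ennreal (Beta (a m) b)
         * (ennreal (dirichlet_kernel m a (a m + b) x) * indicator (simplex_corner m) x)"
  proof -
    have "indicator (simplex_corner m) x = C * (indicator {0..} t :: ennreal)"
      by (auto simp: indicator_def simplex_corner_def C_def t_def)
    moreover have "dirichlet_kernel m a (a m + b) x = P * t powr (a m + b - 1)"
      by (simp add: dirichlet_kernel_def P_def t_def)
    moreover have "ennreal (t powr (a m + b - 1) * Beta (a m) b)
        = ennreal (t powr (a m + b - 1)) * ennreal (Beta (a m) b)"
      using Beta_real_pos[OF am b] by (simp add: ennreal_mult)
    moreover have "ennreal (P * t powr (a m + b - 1)) = ennreal P * ennreal (t powr (a m + b - 1))"
      using P by (simp add: ennreal_mult)
    ultimately show ?thesis by (simp only: mult_ac)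
  qed
  finally show ?thesis .
qed

lemma dirichlet_integral:
  fixes a :: "nat \<Rightarrow> real" and b :: real
  assumes "\<forall>k<m. a k > 0" and "b > 0"
  shows "(\<integral>\<^sup>+x. ennreal (dirichlet_kernel m a b x) * indicator (simplex_corner m) x \<partial>PiM {..<m} (\<lambda>_. lborel))
       = ennreal ((\<Prod>k<m. Gamma (a k)) * Gamma b / Gamma ((\<Sum>k<m. a k) + b))"
  using assms
proof (induction m arbitrary: b)
  case 0
  then have "Gamma b > 0" by simp
  then show ?case by (simp add: PiM_empty dirichlet_kernel_def simplex_corner_def)
next
  case (Suc m)
  interpret product_sigma_finite "\<lambda>_::nat. lborel :: real measure"
    by (simp add: product_sigma_finite_def sigma_finite_lborel)
  have am: "a m > 0" and a: "\<forall>k<m. a k > 0" using Suc.prems by auto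
  have "(\<integral>\<^sup>+x. ennreal (dirichlet_kernel (Suc m) a b x) * indicator (simplex_corner (Suc m)) x
           \<partial>PiM {..<Suc m} (\<lambda>_. lborel))
      = (\<integral>\<^sup>+x. (\<integral>\<^sup>+y. ennreal (dirichlet_kernel (Suc m) a b (x(m := y)))
           * indicator (simplex_corner (Suc m)) (x(m := y)) \<partial>lborel) \<partial>PiM {..<m} (\<lambda>_. lborel))"
    unfolding lessThan_Suc
    by (rule product_nn_integral_insert)
       (auto intro: borel_measurable_dirichlet_kernel_corner[of "Suc m", unfolded lessThan_Suc])
  also have "\<dots> = (\<integral>\<^sup>+x. ennreal (Beta (a m) b) * (ennreal (dirichlet_kernel m a (a m + b) x)
           * indicator (simplex_corner m) x) \<partial>PiM {..<m} (\<lambda>_. lborel))"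
    by (simp only: nn_integral_dirichlet_kernel_last[where a = a and m = m, OF am Suc.prems(2)])
  also have "\<dots> = ennreal (Beta (a m) b)
       * ennreal ((\<Prod>k<m. Gamma (a k)) * Gamma (a m + b) / Gamma ((\<Sum>k<m. a k) + (a m + b)))"
    using Suc.IH[OF a, of "a m + b"] am Suc.prems(2)
    by (subst nn_integral_cmult) (auto simp: borel_measurable_dirichlet_kernel_corner)
  also have "\<dots> = ennreal ((\<Prod>k<Suc m. Gamma (a k)) * Gamma b / Gamma ((\<Sum>k<Suc m. a k) + b))"
  proof -
    have "Gamma (a m + b) > 0" using am Suc.prems(2) by simp
    then have "Beta (a m) b * ((\<Prod>k<m. Gamma (a k)) * Gamma (a m + b) / Gamma ((\<Sum>k<m. a k) + (a m + b)))
        = (\<Prod>k<Suc m. Gamma (a k)) * Gamma b / Gamma ((\<Sum>k<Suc m. a k) + b)"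
      by (simp add: Beta_def add.assoc mult_ac)
    then show ?thesis
      using Beta_real_pos[OF am Suc.prems(2)] by (simp add: ennreal_mult'[symmetric])
  qed
  finally show ?case .
qed

section \<open>Dirichlet distributions\<close>

lemma sets_simplex_measure [simp, measurable_cong]:
  "sets (simplex_measure K) = sets (PiM {..<K} (\<lambda>_. borel))"
  by (simp add: simplex_measure_def)

lemma sets_Dirichlet [simp, measurable_cong]:
  "sets (Dirichlet K \<beta>) = sets (PiM {..<K} (\<lambda>_. borel))"
  by (simp add: Dirichlet_def)

lemma measurable_simplex_coords:
  assumes "K \<ge> 1"
  shows "simplex_coords K \<in> restrict_space (PiM {..<K - 1} (\<lambda>_. lborel)) (simplex_corner (K - 1))
                             \<rightarrow>\<^sub>M PiM {..<K} (\<lambda>_. borel)"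
proof -
  have "simplex_coords K \<in> PiM {..<K - 1} (\<lambda>_. lborel) \<rightarrow>\<^sub>M PiM {..<K} (\<lambda>_. borel)"
    unfolding simplex_coords_def
  proof (rule measurable_PiM_single')
    fix j assume "j \<in> {..<K}"
    then show "(\<lambda>x. if j < K - 1 then x j else if j = K - 1 then 1 - (\<Sum>i<K - 1. x i) else undefined)
        \<in> borel_measurable (PiM {..<K - 1} (\<lambda>_. lborel))"
      by (cases "j < K - 1") auto
  qed (use assms in \<open>auto simp: PiE_def extensional_def\<close>)
  then show ?thesis by (rule measurable_restrict_space1)
qed

lemma nn_integral_simplex_measure:
  assumes K: "K \<ge> 1" and f: "f \<in> borel_measurable (PiM {..<K} (\<lambda>_. borel))"
  shows "(\<integral>\<^sup>+p. f p \<partial>simplex_measure K)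
       = (\<integral>\<^sup>+x. f (simplex_coords K x) * indicator (simplex_corner (K - 1)) x \<partial>PiM {..<K - 1} (\<lambda>_. lborel))"
proof -
  have corner: "simplex_corner (K - 1) \<inter> space (PiM {..<K - 1} (\<lambda>_. lborel))
      \<in> sets (PiM {..<K - 1} (\<lambda>_. lborel))"
    unfolding simplex_corner_def by measurable
  have "(\<integral>\<^sup>+p. f p \<partial>simplex_measure K)
      = (\<integral>\<^sup>+x. f (simplex_coords K x)
           \<partial>restrict_space (PiM {..<K - 1} (\<lambda>_. lborel)) (simplex_corner (K - 1)))"
    unfolding simplex_measure_def simplex_corner_def[symmetric]
    by (rule nn_integral_distr[OF measurable_simplex_coords[OF K]]) (simp add: f)
  also have "\<dots> = (\<integral>\<^sup>+x. f (simplex_coords K x) * indicator (simplex_corner (K - 1)) x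
                       \<partial>PiM {..<K - 1} (\<lambda>_. lborel))"
    by (rule nn_integral_restrict_space[OF corner])
  finally show ?thesis .
qed

lemma finite_measure_simplex_measure:
  assumes K: "K \<ge> 1"
  shows "finite_measure (simplex_measure K)"
proof
  interpret product_sigma_finite "\<lambda>_::nat. lborel :: real measure"
    by (simp add: product_sigma_finite_def sigma_finite_lborel)
  have cube: "indicator (simplex_corner (K - 1)) x \<le> (\<Prod>k<K - 1. indicator {0..1::real} (x k) :: ennreal)"
    for x :: "nat \<Rightarrow> real"
  proof (cases "x \<in> simplex_corner (K - 1)")
    case True
    have "x k \<in> {0..1}" if "k < K - 1" for k
    proof -
      have "x k \<le> (\<Sum>i<K - 1. x i)"
        by (rule member_le_sum) (use True that in \<open>auto simp: simplex_corner_def\<close>)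
      then show ?thesis using True that by (auto simp: simplex_corner_def)
    qed
    then show ?thesis using True by (simp add: indicator_def)
  qed simp
  have "emeasure (simplex_measure K) (space (simplex_measure K)) = (\<integral>\<^sup>+p. 1 \<partial>simplex_measure K)"
    by simp
  also have "\<dots> = (\<integral>\<^sup>+x. indicator (simplex_corner (K - 1)) x \<partial>PiM {..<K - 1} (\<lambda>_. lborel))"
    using nn_integral_simplex_measure[OF K, of "\<lambda>_. 1"] by simp
  also have "\<dots> \<le> (\<integral>\<^sup>+x. (\<Prod>k<K - 1. indicator {0..1::real} (x k)) \<partial>PiM {..<K - 1} (\<lambda>_. lborel))"
    by (rule nn_integral_mono) (rule cube)
  also have "\<dots> = 1"
    by (subst product_nn_integral_prod) auto
  finally show "emeasure (simplex_measure K) (space (simplex_measure K)) \<noteq> \<infinity>"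
    by (auto simp: top_unique)
qed

definition dir_const :: "nat \<Rightarrow> (nat \<Rightarrow> real) \<Rightarrow> real" where
  "dir_const K \<beta> = Gamma (\<Sum>k<K. \<beta> k) / (\<Prod>k<K. Gamma (\<beta> k))"

lemma dir_density_eq: "dir_density K \<beta> p = dir_const K \<beta> * (\<Prod>k<K. p k powr (\<beta> k - 1))"
  by (simp add: dir_density_def dir_const_def)

lemma dir_const_pos:
  assumes "K \<ge> 1" and "\<forall>k<K. \<beta> k > 0"
  shows "dir_const K \<beta> > 0"
proof -
  have "(\<Sum>k<K. \<beta> k) > 0"
    using assms by (intro sum_pos) (auto simp: lessThan_empty_iff)
  moreover have "(\<Prod>k<K. Gamma (\<beta> k)) > 0"
    using assms(2) by (auto intro!: prod_pos)
  ultimately show ?thesis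
    by (simp add: dir_const_def)
qed

lemma dir_density_nonneg:
  assumes "K \<ge> 1" and "\<forall>k<K. \<beta> k > 0"
  shows "dir_density K \<beta> p \<ge> 0"
  using dir_const_pos[OF assms] by (simp add: dir_density_eq prod_nonneg)

lemma dir_density_eq_0_iff:
  assumes "K \<ge> 1" and "\<forall>k<K. \<beta> k > 0"
  shows "dir_density K \<beta> p = 0 \<longleftrightarrow> (\<exists>k<K. p k = 0)"
  using dir_const_pos[OF assms] by (auto simp: dir_density_eq)

lemma dir_density_pos:
  assumes "K \<ge> 1" and "\<forall>k<K. \<beta> k > 0" and "\<forall>k<K. p k \<noteq> 0"
  shows "dir_density K \<beta> p > 0"
  using dir_density_nonneg[OF assms(1,2), of p] dir_density_eq_0_iff[OF assms(1,2), of p] assms(3)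
  by auto

lemma borel_measurable_dir_density [measurable]:
  "dir_density K \<beta> \<in> borel_measurable (PiM {..<K} (\<lambda>_. borel))"
  unfolding dir_density_def by measurable

lemma nn_integral_dir_density:
  assumes K: "K \<ge> 1" and \<beta>: "\<forall>k<K. \<beta> k > 0"
  shows "(\<integral>\<^sup>+p. ennreal (dir_density K \<beta> p) \<partial>simplex_measure K) = 1"
proof -
  obtain m where m: "K = Suc m" using K by (cases K) auto
  then have m': "K - 1 = m" by simp
  have kernel: "dir_density K \<beta> (simplex_coords K x) = dir_const K \<beta> * dirichlet_kernel m \<beta> (\<beta> m) x" for x
    by (auto simp: m dir_density_eq dirichlet_kernel_def simplex_coords_def intro!: prod.cong)
  have "(\<integral>\<^sup>+p. ennreal (dir_density K \<beta> p) \<partial>simplex_measure K)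
      = (\<integral>\<^sup>+x. ennreal (dir_density K \<beta> (simplex_coords K x)) * indicator (simplex_corner m) x
           \<partial>PiM {..<m} (\<lambda>_. lborel))"
    unfolding m'[symmetric] by (rule nn_integral_simplex_measure[OF K]) measurable
  also have "\<dots> = (\<integral>\<^sup>+x. ennreal (dir_const K \<beta>) * (ennreal (dirichlet_kernel m \<beta> (\<beta> m) x)
            * indicator (simplex_corner m) x) \<partial>PiM {..<m} (\<lambda>_. lborel))"
    using dir_const_pos[OF K \<beta>]
    by (intro nn_integral_cong) (simp add: kernel ennreal_mult' mult.assoc)
  also have "\<dots> = ennreal (dir_const K \<beta>)
      * ennreal ((\<Prod>k<m. Gamma (\<beta> k)) * Gamma (\<beta> m) / Gamma ((\<Sum>k<m. \<beta> k) + \<beta> m))"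
    using \<beta> m
    by (subst nn_integral_cmult) (auto simp: borel_measurable_dirichlet_kernel_corner dirichlet_integral)
  also have "\<dots> = 1"
  proof -
    define A where "A = (\<Prod>k<m. Gamma (\<beta> k)) * Gamma (\<beta> m)"
    define G where "G = Gamma ((\<Sum>k<m. \<beta> k) + \<beta> m)"
    have "A > 0"
      using \<beta> m by (auto simp: A_def intro!: mult_pos_pos prod_pos)
    moreover have "(\<Sum>k<m. \<beta> k) + \<beta> m > 0"
      using \<beta> m by (intro add_nonneg_pos sum_nonneg) (auto intro: less_imp_le)
    then have "G > 0" by (simp add: G_def)
    moreover have "dir_const K \<beta> = G / A"
      by (simp add: m dir_const_def A_def G_def)
    ultimately show ?thesis
      by (simp add: ennreal_mult'[symmetric] A_def[symmetric] G_def[symmetric])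
  qed
  finally show ?thesis .
qed

lemma integrable_dir_density:
  assumes "K \<ge> 1" and "\<forall>k<K. \<beta> k > 0"
  shows "integrable (simplex_measure K) (dir_density K \<beta>)"
  using nn_integral_dir_density[OF assms] dir_density_nonneg[OF assms]
  by (intro integrableI_nonneg) auto

lemma prob_space_Dirichlet:
  assumes "K \<ge> 1" and "\<forall>k<K. \<beta> k > 0"
  shows "prob_space (Dirichlet K \<beta>)"
proof
  have "emeasure (Dirichlet K \<beta>) (space (Dirichlet K \<beta>))
      = (\<integral>\<^sup>+p. ennreal (dir_density K \<beta> p) * indicator (space (simplex_measure K)) p \<partial>simplex_measure K)"
    using sets.top[of "simplex_measure K"] unfolding Dirichlet_def by (subst emeasure_density) auto
  also have "\<dots> = (\<integral>\<^sup>+p. ennreal (dir_density K \<beta> p) \<partial>simplex_measure K)"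
    by (rule nn_integral_cong) simp
  also have "\<dots> = 1"
    by (rule nn_integral_dir_density[OF assms])
  finally show "emeasure (Dirichlet K \<beta>) (space (Dirichlet K \<beta>)) = 1" .
qed

lemma sigma_finite_Dirichlet:
  assumes "K \<ge> 1"
  shows "sigma_finite_measure (Dirichlet K \<beta>)"
proof -
  interpret finite_measure "simplex_measure K" by (rule finite_measure_simplex_measure[OF assms])
  show ?thesis
    unfolding Dirichlet_def by (subst sigma_finite_iff_density_finite) auto
qed

lemma AE_Dirichlet_nonzero:
  assumes "K \<ge> 1" and "\<forall>k<K. \<beta> k > 0"
  shows "AE p in Dirichlet K \<beta>. \<forall>k<K. p k \<noteq> 0"
proof -
  have "AE p in simplex_measure K. 0 < dir_density K \<beta> p \<longrightarrow> (\<forall>k<K. p k \<noteq> 0)"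
    using dir_density_eq_0_iff[OF assms] by (intro AE_I2) (metis less_irrefl)
  then show ?thesis
    unfolding Dirichlet_def by (subst AE_density) auto
qed

lemma abs_ln_le_powr:
  fixes x e :: real
  assumes "e > 0"
  shows "\<bar>ln x\<bar> \<le> (x powr e + x powr (- e)) / e"
proof (cases "x = 0")
  case False
  have "\<bar>e * ln x\<bar> \<le> exp (e * ln x) + exp (- (e * ln x))"
    using exp_ge_add_one_self[of "e * ln x"] exp_ge_add_one_self[of "- (e * ln x)"]
      exp_gt_zero[of "e * ln x"] exp_gt_zero[of "- (e * ln x)"]
    by linarith
  then show ?thesis
    using False assms by (simp add: powr_def abs_mult field_simps)
qed simp

lemma dir_density_mult_powr:
  assumes k: "k < K" and nz: "dir_const K (\<beta>(k := \<beta> k + t)) \<noteq> 0"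
  shows "dir_density K \<beta> p * p k powr t
       = dir_const K \<beta> / dir_const K (\<beta>(k := \<beta> k + t)) * dir_density K (\<beta>(k := \<beta> k + t)) p"
proof -
  let ?\<beta>' = "\<beta>(k := \<beta> k + t)"
  have rest: "(\<Prod>j\<in>{..<K} - {k}. p j powr (?\<beta>' j - 1)) = (\<Prod>j\<in>{..<K} - {k}. p j powr (\<beta> j - 1))"
    by (rule prod.cong) auto
  have "(\<Prod>j<K. p j powr (?\<beta>' j - 1)) = p k powr (\<beta> k + t - 1) * (\<Prod>j\<in>{..<K} - {k}. p j powr (\<beta> j - 1))"
    using k by (simp add: prod.remove[of _ k] rest)
  also have "\<dots> = (\<Prod>j<K. p j powr (\<beta> j - 1)) * p k powr t"
    using k by (simp add: prod.remove[of _ k] powr_add[symmetric] algebra_simps)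
  finally show ?thesis
    using nz by (simp add: dir_density_eq)
qed

lemma integrable_ln_of_powr:
  fixes f :: "'a \<Rightarrow> real"
  assumes e: "e > 0" and f: "f \<in> borel_measurable M"
    and "integrable M (\<lambda>x. f x powr e)" and "integrable M (\<lambda>x. f x powr (- e))"
  shows "integrable M (\<lambda>x. ln (f x))"
proof (rule Bochner_Integration.integrable_bound)
  show "integrable M (\<lambda>x. (f x powr e + f x powr (- e)) / e)"
    using assms(3,4) by auto
  show "AE x in M. norm (ln (f x)) \<le> norm ((f x powr e + f x powr (- e)) / e)"
  proof (rule AE_I2)
    fix x
    have "\<bar>ln (f x)\<bar> \<le> (f x powr e + f x powr (- e)) / e"
      by (rule abs_ln_le_powr[OF e])
    also have "\<dots> \<le> \<bar>(f x powr e + f x powr (- e)) / e\<bar>"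
      by (rule abs_ge_self)
    finally show "norm (ln (f x)) \<le> norm ((f x powr e + f x powr (- e)) / e)"
      by simp
  qed
qed (use f in measurable)

lemma integrable_Dirichlet_powr:
  assumes K: "K \<ge> 1" and \<beta>: "\<forall>k<K. \<beta> k > 0" and k: "k < K" and t: "\<beta> k + t > 0"
  shows "integrable (Dirichlet K \<beta>) (\<lambda>p. p k powr t)"
proof -
  let ?\<beta>' = "\<beta>(k := \<beta> k + t)"
  have \<beta>': "\<forall>j<K. ?\<beta>' j > 0"
    using \<beta> t by simp
  have "k \<in> {..<K}" using k by simp
  have "integrable (simplex_measure K) (\<lambda>p. dir_const K \<beta> / dir_const K ?\<beta>' * dir_density K ?\<beta>' p)"
    by (rule Bochner_Integration.integrable_mult_right[OF integrable_dir_density[OF K \<beta>']])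
  then have "integrable (simplex_measure K) (\<lambda>p. dir_density K \<beta> p *\<^sub>R p k powr t)"
    using dir_density_mult_powr[OF k not_sym[OF less_imp_neq[OF dir_const_pos[OF K \<beta>']]]] by simp
  then show ?thesis
    unfolding Dirichlet_def using \<open>k \<in> {..<K}\<close>
    by (subst integrable_density) (auto simp: dir_density_nonneg[OF K \<beta>])
qed

lemma integrable_Dirichlet_ln:
  assumes K: "K \<ge> 1" and \<beta>: "\<forall>k<K. \<beta> k > 0" and k: "k < K"
  shows "integrable (Dirichlet K \<beta>) (\<lambda>p. ln (p k))"
proof (rule integrable_ln_of_powr)
  show "\<beta> k / 2 > 0"
    using \<beta> k by simp
  show "integrable (Dirichlet K \<beta>) (\<lambda>p. p k powr (\<beta> k / 2))"
    and "integrable (Dirichlet K \<beta>) (\<lambda>p. p k powr (- (\<beta> k / 2)))"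
    using \<beta> k by (intro integrable_Dirichlet_powr[OF K \<beta> k]; simp)+
  have "k \<in> {..<K}" using k by simp
  then show "(\<lambda>p. p k) \<in> borel_measurable (Dirichlet K \<beta>)"
    by measurable
qed

lemma ln_dir_density:
  assumes "K \<ge> 1" and "\<forall>k<K. \<beta> k > 0" and p: "\<forall>k<K. p k \<noteq> 0"
  shows "ln (dir_density K \<beta> p) = ln (dir_const K \<beta>) + (\<Sum>k<K. (\<beta> k - 1) * ln (p k))"
proof -
  have "(\<Prod>k<K. p k powr (\<beta> k - 1)) > 0"
    using p by (intro prod_pos) simp
  then have "ln (dir_density K \<beta> p) = ln (dir_const K \<beta>) + ln (\<Prod>k<K. p k powr (\<beta> k - 1))"
    using dir_const_pos[OF assms(1,2)] p by (simp add: dir_density_eq ln_mult)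
  also have "ln (\<Prod>k<K. p k powr (\<beta> k - 1)) = (\<Sum>k<K. ln (p k powr (\<beta> k - 1)))"
    using p by (intro ln_prod) auto
  finally show ?thesis by simp
qed

lemma integrable_Dirichlet_ln_ratio:
  assumes K: "K \<ge> 1" and \<beta>: "\<forall>k<K. \<beta> k > 0" and \<gamma>: "\<forall>k<K. \<gamma> k > 0"
  shows "integrable (Dirichlet K \<beta>) (\<lambda>p. ln (dir_density K \<beta> p / dir_density K \<gamma> p))"
proof (rule integrable_cong_AE_imp)
  interpret prob_space "Dirichlet K \<beta>" by (rule prob_space_Dirichlet[OF K \<beta>])
  let ?g = "\<lambda>p. ln (dir_const K \<beta>) - ln (dir_const K \<gamma>) + (\<Sum>k<K. (\<beta> k - \<gamma> k) * ln (p k))"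
  show "integrable (Dirichlet K \<beta>) ?g"
    using integrable_Dirichlet_ln[OF K \<beta>]
    by (intro Bochner_Integration.integrable_add Bochner_Integration.integrable_sum
              Bochner_Integration.integrable_mult_right) auto
  show "AE p in Dirichlet K \<beta>. ?g p = ln (dir_density K \<beta> p / dir_density K \<gamma> p)"
    using AE_Dirichlet_nonzero[OF K \<beta>]
  proof (rule AE_mp, intro AE_I2 impI)
    fix p :: "nat \<Rightarrow> real"
    assume p: "\<forall>k<K. p k \<noteq> 0"
    then have "dir_density K \<beta> p > 0" "dir_density K \<gamma> p > 0"
      using dir_density_pos[OF K \<beta>] dir_density_pos[OF K \<gamma>] by auto
    then show "?g p = ln (dir_density K \<beta> p / dir_density K \<gamma> p)"
      by (simp add: ln_div ln_dir_density[OF K \<beta> p] ln_dir_density[OF K \<gamma> p]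
                    sum_subtractf[symmetric] sum.distrib[symmetric] algebra_simps)
  qed
qed measurable

lemma (in sigma_finite_measure) KL_density_density_eq_integral_ln:
  assumes f: "f \<in> borel_measurable M" "\<And>x. f x \<ge> 0"
    and g: "g \<in> borel_measurable M" "\<And>x. g x \<ge> 0"
    and ac: "AE x in M. f x = 0 \<longrightarrow> g x = 0"
  shows "KL (density M g) (density M f) = (\<integral>x. ln (g x / f x) \<partial>density M g)"
proof -
  have "KL (density M g) (density M f) = (\<integral>x. g x * log (exp 1) (g x / f x) \<partial>M)"
    unfolding KL_def using f g ac by (intro KL_density_density) auto
  also have "\<dots> = (\<integral>x. ln (g x / f x) \<partial>density M g)"
    using f g by (subst integral_density) (auto simp: log_def)
  finally show ?thesis .
qed

lemma KL_Dirichlet: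
  assumes K: "K \<ge> 1" and \<beta>: "\<forall>k<K. \<beta> k > 0" and \<gamma>: "\<forall>k<K. \<gamma> k > 0"
  shows "KL (Dirichlet K \<beta>) (Dirichlet K \<gamma>) = (\<integral>p. ln (dir_density K \<beta> p / dir_density K \<gamma> p) \<partial>Dirichlet K \<beta>)"
proof -
  interpret finite_measure "simplex_measure K" by (rule finite_measure_simplex_measure[OF K])
  show ?thesis
    unfolding Dirichlet_def
    using dir_density_nonneg[OF K \<beta>] dir_density_nonneg[OF K \<gamma>]
      dir_density_eq_0_iff[OF K \<beta>] dir_density_eq_0_iff[OF K \<gamma>]
    by (intro KL_density_density_eq_integral_ln) auto
qed

section \<open>Products of Dirichlet distributions\<close>

lemma integral_PiM_sum_component:
  fixes f :: "'i \<Rightarrow> 'a \<Rightarrow> real"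
  assumes I: "finite I" and M: "\<And>i. i \<in> I \<Longrightarrow> prob_space (M i)"
    and f: "\<And>i. i \<in> I \<Longrightarrow> integrable (M i) (f i)"
  shows "(\<integral>x. (\<Sum>i\<in>I. f i (x i)) \<partial>PiM I M) = (\<Sum>i\<in>I. \<integral>y. f i y \<partial>M i)"
proof -
  have "integrable (PiM I M) (\<lambda>x. f i (x i))"
    "(\<integral>x. f i (x i) \<partial>PiM I M) = (\<integral>y. f i y \<partial>M i)" if i: "i \<in> I" for i
  proof -
    have T: "(\<lambda>x. x i) \<in> PiM I M \<rightarrow>\<^sub>M M i"
      using i by (rule measurable_component_singleton)
    have fm: "f i \<in> borel_measurable (M i)"
      using f[OF i] by (rule borel_measurable_integrable)
    have "distr (PiM I M) (M i) (\<lambda>x. x i) = M i"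
      by (rule distr_PiM_component[OF M i])
    then show "integrable (PiM I M) (\<lambda>x. f i (x i))" "(\<integral>x. f i (x i) \<partial>PiM I M) = (\<integral>y. f i y \<partial>M i)"
      using integrable_distr_eq[OF T fm] integral_distr[OF T fm] f[OF i] by simp_all
  qed
  then show ?thesis
    by (simp add: Bochner_Integration.integral_sum)
qed

lemma indicator_PiE_eq_prod:
  assumes "finite I" and "P \<in> extensional I"
  shows "(indicator (Pi\<^sub>E I A) P :: ennreal) = (\<Prod>i\<in>I. indicator (A i) (P i))"
  using assms by (auto simp: indicator_def PiE_iff prod_zero_iff)

lemma (in product_sigma_finite) PiM_density:
  fixes f :: "'i \<Rightarrow> 'a \<Rightarrow> ennreal"
  assumes I: "finite I" and f: "\<And>i. i \<in> I \<Longrightarrow> f i \<in> borel_measurable (M i)"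
    and sigma_finite: "product_sigma_finite (\<lambda>i. density (M i) (f i))"
  shows "PiM I (\<lambda>i. density (M i) (f i)) = density (PiM I M) (\<lambda>x. \<Prod>i\<in>I. f i (x i))"
  using sigma_finite
proof (rule product_sigma_finite.PiM_eqI[symmetric])
  show "sets (density (PiM I M) (\<lambda>x. \<Prod>i\<in>I. f i (x i))) = sets (PiM I (\<lambda>i. density (M i) (f i)))"
    unfolding sets_density by (rule sets_PiM_cong) simp_all
next
  fix A assume "\<And>i. i \<in> I \<Longrightarrow> A i \<in> sets (density (M i) (f i))"
  then have A: "A i \<in> sets (M i)" if "i \<in> I" for i
    using that by simp
  have F: "(\<lambda>x. \<Prod>i\<in>I. f i (x i)) \<in> borel_measurable (PiM I M)"
    using f by (intro borel_measurable_prod_ennreal measurable_compose[OF measurable_component_singleton])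
  have "emeasure (density (PiM I M) (\<lambda>x. \<Prod>i\<in>I. f i (x i))) (Pi\<^sub>E I A)
      = (\<integral>\<^sup>+x. (\<Prod>i\<in>I. f i (x i)) * indicator (Pi\<^sub>E I A) x \<partial>PiM I M)"
    using A I by (intro emeasure_density[OF F] sets_PiM_I_finite) auto
  also have "\<dots> = (\<integral>\<^sup>+x. (\<Prod>i\<in>I. f i (x i) * indicator (A i) (x i)) \<partial>PiM I M)"
  proof (rule nn_integral_cong)
    fix x assume "x \<in> space (PiM I M)"
    then have "x \<in> extensional I" by (simp add: space_PiM PiE_iff)
    then show "(\<Prod>i\<in>I. f i (x i)) * indicator (Pi\<^sub>E I A) x = (\<Prod>i\<in>I. f i (x i) * indicator (A i) (x i))"
      using I by (simp add: indicator_PiE_eq_prod prod.distrib)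
  qed
  also have "\<dots> = (\<Prod>i\<in>I. \<integral>\<^sup>+y. f i y * indicator (A i) y \<partial>M i)"
    using A f I by (intro product_nn_integral_prod) auto
  also have "\<dots> = (\<Prod>i\<in>I. emeasure (density (M i) (f i)) (A i))"
    using A f by (intro prod.cong refl emeasure_density[symmetric]) auto
  finally show "emeasure (density (PiM I M) (\<lambda>x. \<Prod>i\<in>I. f i (x i))) (Pi\<^sub>E I A)
      = (\<Prod>i\<in>I. emeasure (density (M i) (f i)) (A i))" .
qed (rule I)

lemma PiM_Dirichlet_eq_density:
  fixes \<beta> :: "'i \<Rightarrow> nat \<Rightarrow> real"
  assumes K: "K \<ge> 1" and I: "finite I" and \<beta>: "\<forall>i\<in>I. \<forall>k<K. \<beta> i k > 0"
  shows "PiM I (\<lambda>i. Dirichlet K (\<beta> i))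
       = density (PiM I (\<lambda>_. simplex_measure K)) (\<lambda>P. ennreal (\<Prod>i\<in>I. dir_density K (\<beta> i) (P i)))"
proof -
  interpret S: finite_measure "simplex_measure K" by (rule finite_measure_simplex_measure[OF K])
  interpret PS: product_sigma_finite "\<lambda>_::'i. simplex_measure K"
    by (simp add: product_sigma_finite_def S.sigma_finite_measure_axioms)
  have "PiM I (\<lambda>i. Dirichlet K (\<beta> i))
      = density (PiM I (\<lambda>_. simplex_measure K)) (\<lambda>P. \<Prod>i\<in>I. ennreal (dir_density K (\<beta> i) (P i)))"
    using sigma_finite_Dirichlet[OF K] unfolding Dirichlet_def
    by (intro PS.PiM_density I) (simp_all add: product_sigma_finite_def)
  also have "(\<lambda>P. \<Prod>i\<in>I. ennreal (dir_density K (\<beta> i) (P i)))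
      = (\<lambda>P. ennreal (\<Prod>i\<in>I. dir_density K (\<beta> i) (P i)))"
    using \<beta> dir_density_nonneg[OF K] by (simp add: prod_ennreal)
  finally show ?thesis .
qed

lemma AE_PiM_Dirichlet_nonzero:
  assumes K: "K \<ge> 1" and I: "finite I" and \<beta>: "\<forall>i\<in>I. \<forall>k<K. \<beta> i k > 0"
  shows "AE P in PiM I (\<lambda>i. Dirichlet K (\<beta> i)). \<forall>i\<in>I. \<forall>k<K. P i k \<noteq> 0"
  using I
proof (rule AE_finite_allI)
  fix i assume "i \<in> I"
  then show "AE P in PiM I (\<lambda>i. Dirichlet K (\<beta> i)). \<forall>k<K. P i k \<noteq> 0"
    using \<beta> by (intro AE_PiM_component prob_space_Dirichlet[OF K] AE_Dirichlet_nonzero[OF K]) auto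
qed

lemma KL_PiM_Dirichlet:
  fixes \<beta> \<gamma> :: "'i \<Rightarrow> nat \<Rightarrow> real"
  assumes K: "K \<ge> 1" and I: "finite I"
    and \<beta>: "\<forall>i\<in>I. \<forall>k<K. \<beta> i k > 0" and \<gamma>: "\<forall>i\<in>I. \<forall>k<K. \<gamma> i k > 0"
  shows "KL (PiM I (\<lambda>i. Dirichlet K (\<beta> i))) (PiM I (\<lambda>i. Dirichlet K (\<gamma> i)))
       = (\<Sum>i\<in>I. KL (Dirichlet K (\<beta> i)) (Dirichlet K (\<gamma> i)))"
proof -
  interpret S: finite_measure "simplex_measure K" by (rule finite_measure_simplex_measure[OF K])
  interpret PS: product_sigma_finite "\<lambda>_::'i. simplex_measure K"
    by (simp add: product_sigma_finite_def S.sigma_finite_measure_axioms)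
  interpret B: sigma_finite_measure "PiM I (\<lambda>_::'i. simplex_measure K)"
    by (rule PS.sigma_finite[OF I])
  define h where "h \<delta> P = (\<Prod>i\<in>I. dir_density K (\<delta> i) (P i))" for \<delta> :: "'i \<Rightarrow> nat \<Rightarrow> real" and P
  define r where "r i p = ln (dir_density K (\<beta> i) p / dir_density K (\<gamma> i) p)" for i p
  have h_eq_0_iff: "h \<delta> P = 0 \<longleftrightarrow> (\<exists>i\<in>I. \<exists>k<K. P i k = 0)"
    if "\<forall>i\<in>I. \<forall>k<K. \<delta> i k > 0" for \<delta> and P :: "'i \<Rightarrow> nat \<Rightarrow> real"
    using that I by (auto simp: h_def dir_density_eq_0_iff[OF K])
  have "KL (PiM I (\<lambda>i. Dirichlet K (\<beta> i))) (PiM I (\<lambda>i. Dirichlet K (\<gamma> i)))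
      = (\<integral>P. ln (h \<beta> P / h \<gamma> P) \<partial>PiM I (\<lambda>i. Dirichlet K (\<beta> i)))"
    unfolding PiM_Dirichlet_eq_density[OF K I \<beta>] PiM_Dirichlet_eq_density[OF K I \<gamma>] h_def[symmetric]
    using h_eq_0_iff[OF \<beta>] h_eq_0_iff[OF \<gamma>] \<beta> \<gamma> dir_density_nonneg[OF K]
    by (intro B.KL_density_density_eq_integral_ln AE_I2) (auto simp: h_def prod_nonneg)
  also have "\<dots> = (\<integral>P. (\<Sum>i\<in>I. r i (P i)) \<partial>PiM I (\<lambda>i. Dirichlet K (\<beta> i)))"
  proof (rule integral_cong_AE)
    show "AE P in PiM I (\<lambda>i. Dirichlet K (\<beta> i)). ln (h \<beta> P / h \<gamma> P) = (\<Sum>i\<in>I. r i (P i))"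
      using AE_PiM_Dirichlet_nonzero[OF K I \<beta>]
    proof (rule AE_mp, intro AE_I2 impI)
      fix P :: "'i \<Rightarrow> nat \<Rightarrow> real"
      assume P: "\<forall>i\<in>I. \<forall>k<K. P i k \<noteq> 0"
      have "dir_density K (\<beta> i) (P i) > 0" "dir_density K (\<gamma> i) (P i) > 0" if "i \<in> I" for i
        using that P \<beta> \<gamma> by (simp_all add: dir_density_pos[OF K])
      then show "ln (h \<beta> P / h \<gamma> P) = (\<Sum>i\<in>I. r i (P i))"
        unfolding h_def r_def prod_dividef[symmetric] using I by (intro ln_prod) force+
    qed
  qed (unfold h_def[abs_def] r_def[abs_def], measurable)
  also have "\<dots> = (\<Sum>i\<in>I. \<integral>p. r i p \<partial>Dirichlet K (\<beta> i))"
    using \<beta> \<gamma> unfolding r_def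
    by (intro integral_PiM_sum_component I prob_space_Dirichlet[OF K] integrable_Dirichlet_ln_ratio[OF K]) auto
  also have "\<dots> = (\<Sum>i\<in>I. KL (Dirichlet K (\<beta> i)) (Dirichlet K (\<gamma> i)))"
    using \<beta> \<gamma> unfolding r_def by (intro sum.cong refl KL_Dirichlet[OF K, symmetric]) auto
  finally show ?thesis .
qed

section \<open>The tempered posterior\<close>

lemma cat_pmf_eq: "y < K \<Longrightarrow> cat_pmf K p y = p y"
  unfolding cat_pmf_def
  by (subst prod.cong[OF refl, of _ _ "\<lambda>k. if k = y then p k else 1"]) auto

lemma fun_upd_add_pos:
  fixes \<alpha> :: "nat \<Rightarrow> real"
  assumes "\<forall>k<K. \<alpha> k > 0" and "\<nu> \<ge> 0"
  shows "\<forall>k<K. (\<alpha>(y := \<alpha> y + \<nu>)) k > 0"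
  using assms by (simp add: add_pos_nonneg)

text \<open>The normaliser \<open>E\<^bsub>Dir \<alpha>\<^esub>[p\<^sub>y\<^sup>\<nu>]\<close> of one tempered likelihood factor;
  \<open>\<alpha>(y := \<alpha> y + \<nu>)\<close> is the paper's \<open>\<alpha> + \<nu> e\<^sub>y\<close>.\<close>

definition tempered_evidence :: "nat \<Rightarrow> (nat \<Rightarrow> real) \<Rightarrow> real \<Rightarrow> nat \<Rightarrow> real" where
  "tempered_evidence K \<alpha> \<nu> y = dir_const K \<alpha> / dir_const K (\<alpha>(y := \<alpha> y + \<nu>))"

lemma tempered_evidence_pos:
  assumes "K \<ge> 1" and "\<forall>k<K. \<alpha> k > 0" and "\<nu> \<ge> 0"
  shows "tempered_evidence K \<alpha> \<nu> y > 0"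
  unfolding tempered_evidence_def
  using dir_const_pos[OF assms(1,2)] dir_const_pos[OF assms(1) fun_upd_add_pos[OF assms(2,3)]]
  by (rule divide_pos_pos)

lemma cat_pmf_powr_mult_dir_density:
  assumes K: "K \<ge> 1" and \<alpha>: "\<forall>k<K. \<alpha> k > 0" and \<nu>: "\<nu> \<ge> 0" and y: "y < K"
  shows "cat_pmf K p y powr \<nu> * dir_density K \<alpha> p
       = tempered_evidence K \<alpha> \<nu> y * dir_density K (\<alpha>(y := \<alpha> y + \<nu>)) p"
  using dir_density_mult_powr[OF y not_sym[OF less_imp_neq[OF dir_const_pos[OF K fun_upd_add_pos[OF \<alpha> \<nu>]]]]]
  by (simp add: cat_pmf_eq[OF y] tempered_evidence_def mult.commute)

lemma tempered_posterior_eq_PiM_Dirichlet: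
  assumes K: "K \<ge> 1" and \<alpha>: "\<forall>k<K. \<alpha> k > 0" and \<nu>: "\<nu> \<ge> 0" and Y: "\<forall>i<n. Y i < K"
  shows "tempered_posterior K \<alpha> \<nu> n Y = PiM {..<n} (\<lambda>i. Dirichlet K (\<alpha>(Y i := \<alpha> (Y i) + \<nu>)))"
proof -
  let ?base = "PiM {..<n} (\<lambda>_. simplex_measure K)"
  define h where "h P = (\<Prod>i<n. dir_density K (\<alpha>(Y i := \<alpha> (Y i) + \<nu>)) (P i))" for P :: "nat \<Rightarrow> nat \<Rightarrow> real"
  define Z where "Z = (\<Prod>i<n. tempered_evidence K \<alpha> \<nu> (Y i))"
  have post: "\<forall>i\<in>{..<n}. \<forall>k<K. (\<alpha>(Y i := \<alpha> (Y i) + \<nu>)) k > 0"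
    using fun_upd_add_pos[OF \<alpha> \<nu>] by blast
  have Z: "Z > 0"
    unfolding Z_def using tempered_evidence_pos[OF K \<alpha> \<nu>] by (simp add: prod_pos)
  have h: "h P \<ge> 0" for P
    unfolding h_def using post by (blast intro: prod_nonneg dir_density_nonneg[OF K])
  have likelihood: "(\<Prod>i<n. cat_pmf K (P i) (Y i) powr \<nu> * dir_density K \<alpha> (P i)) = Z * h P" for P
    using Y by (simp add: Z_def h_def cat_pmf_powr_mult_dir_density[OF K \<alpha> \<nu>] prod.distrib)
  have Q: "PiM {..<n} (\<lambda>i. Dirichlet K (\<alpha>(Y i := \<alpha> (Y i) + \<nu>))) = density ?base (\<lambda>P. ennreal (h P))"
    unfolding h_def by (rule PiM_Dirichlet_eq_density[OF K finite_lessThan post])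
  have "prob_space (density ?base (\<lambda>P. ennreal (h P)))"
    unfolding Q[symmetric] using post by (intro prob_space_PiM prob_space_Dirichlet[OF K]) auto
  then have "emeasure (density ?base (\<lambda>P. ennreal (h P))) (space ?base) = 1"
    by (metis prob_space.emeasure_space_1 space_density)
  then have "(\<integral>\<^sup>+P. ennreal (h P) \<partial>?base) = 1"
    unfolding h_def by (simp add: emeasure_density cong: nn_integral_cong)
  then have evidence: "(\<integral>\<^sup>+P. ennreal (Z * h P) \<partial>?base) = ennreal Z"
    using Z h unfolding h_def by (simp add: ennreal_mult nn_integral_cmult)
  have "ennreal (Z * h P) / ennreal Z = ennreal (h P)" for P
    using Z h by (simp add: divide_ennreal)
  then show ?thesis
    unfolding tempered_posterior_def Let_def likelihood evidence Q by simp
qed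

lemma KL_Dirichlet_tempered_update:
  assumes K: "K \<ge> 1" and \<beta>: "\<forall>k<K. \<beta> k > 0" and \<alpha>: "\<forall>k<K. \<alpha> k > 0" and \<nu>: "\<nu> \<ge> 0"
    and y: "y < K"
  shows "KL (Dirichlet K \<beta>) (Dirichlet K (\<alpha>(y := \<alpha> y + \<nu>)))
       = KL (Dirichlet K \<beta>) (Dirichlet K \<alpha>) - \<nu> * (\<integral>p. ln (p y) \<partial>Dirichlet K \<beta>)
         + ln (tempered_evidence K \<alpha> \<nu> y)"
proof -
  interpret prob_space "Dirichlet K \<beta>" by (rule prob_space_Dirichlet[OF K \<beta>])
  let ?\<alpha>' = "\<alpha>(y := \<alpha> y + \<nu>)"
  let ?z = "tempered_evidence K \<alpha> \<nu> y"
  have \<alpha>': "\<forall>k<K. ?\<alpha>' k > 0"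
    by (rule fun_upd_add_pos[OF \<alpha> \<nu>])
  have "y \<in> {..<K}" using y by simp
  have "KL (Dirichlet K \<beta>) (Dirichlet K ?\<alpha>') = (\<integral>p. ln (dir_density K \<beta> p / dir_density K ?\<alpha>' p) \<partial>Dirichlet K \<beta>)"
    by (rule KL_Dirichlet[OF K \<beta> \<alpha>'])
  also have "\<dots> = (\<integral>p. ln (dir_density K \<beta> p / dir_density K \<alpha> p) - \<nu> * ln (p y) + ln ?z \<partial>Dirichlet K \<beta>)"
  proof (rule integral_cong_AE)
    show "AE p in Dirichlet K \<beta>. ln (dir_density K \<beta> p / dir_density K ?\<alpha>' p)
        = ln (dir_density K \<beta> p / dir_density K \<alpha> p) - \<nu> * ln (p y) + ln ?z"
      using AE_Dirichlet_nonzero[OF K \<beta>]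
    proof (rule AE_mp, intro AE_I2 impI)
      fix p :: "nat \<Rightarrow> real"
      assume p: "\<forall>k<K. p k \<noteq> 0"
      have "dir_density K ?\<alpha>' p = dir_density K \<alpha> p * p y powr \<nu> / ?z"
        using cat_pmf_powr_mult_dir_density[OF K \<alpha> \<nu> y, of p] tempered_evidence_pos[OF K \<alpha> \<nu>, of y]
        by (simp add: cat_pmf_eq[OF y] field_simps)
      then show "ln (dir_density K \<beta> p / dir_density K ?\<alpha>' p)
          = ln (dir_density K \<beta> p / dir_density K \<alpha> p) - \<nu> * ln (p y) + ln ?z"
        using dir_density_pos[OF K \<beta> p] dir_density_pos[OF K \<alpha> p] tempered_evidence_pos[OF K \<alpha> \<nu>, of y] p y
        by (simp add: ln_div ln_mult)
    qed
  qed (use \<open>y \<in> {..<K}\<close> in measurable)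
  also have "\<dots> = KL (Dirichlet K \<beta>) (Dirichlet K \<alpha>) - \<nu> * (\<integral>p. ln (p y) \<partial>Dirichlet K \<beta>) + ln ?z"
    using integrable_Dirichlet_ln_ratio[OF K \<beta> \<alpha>] integrable_Dirichlet_ln[OF K \<beta> y]
    by (simp add: KL_Dirichlet[OF K \<beta> \<alpha>] prob_space)
  finally show ?thesis .
qed

lemma KL_PiM_Dirichlet_tempered_posterior:
  fixes \<beta> :: "nat \<Rightarrow> nat \<Rightarrow> real"
  assumes K: "K \<ge> 1" and \<alpha>: "\<forall>k<K. \<alpha> k > 0" and \<nu>: "\<nu> \<ge> 0" and Y: "\<forall>i<n. Y i < K"
    and \<beta>: "\<forall>i<n. \<forall>k<K. \<beta> i k > 0"
  shows "KL (PiM {..<n} (\<lambda>i. Dirichlet K (\<beta> i))) (tempered_posterior K \<alpha> \<nu> n Y)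
       = (\<Sum>i<n. KL (Dirichlet K (\<beta> i)) (Dirichlet K \<alpha>)
                 - \<nu> * (\<integral>p. ln (cat_pmf K p (Y i)) \<partial>Dirichlet K (\<beta> i)))
         + (\<Sum>i<n. ln (tempered_evidence K \<alpha> \<nu> (Y i)))"
proof -
  have post: "\<forall>i\<in>{..<n}. \<forall>k<K. (\<alpha>(Y i := \<alpha> (Y i) + \<nu>)) k > 0"
    using fun_upd_add_pos[OF \<alpha> \<nu>] by blast
  have "KL (PiM {..<n} (\<lambda>i. Dirichlet K (\<beta> i))) (tempered_posterior K \<alpha> \<nu> n Y)
      = (\<Sum>i<n. KL (Dirichlet K (\<beta> i)) (Dirichlet K (\<alpha>(Y i := \<alpha> (Y i) + \<nu>))))"
    unfolding tempered_posterior_eq_PiM_Dirichlet[OF K \<alpha> \<nu> Y]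
    using \<beta> post by (intro KL_PiM_Dirichlet[OF K finite_lessThan]) auto
  also have "\<dots> = (\<Sum>i<n. KL (Dirichlet K (\<beta> i)) (Dirichlet K \<alpha>)
                 - \<nu> * (\<integral>p. ln (cat_pmf K p (Y i)) \<partial>Dirichlet K (\<beta> i))
                 + ln (tempered_evidence K \<alpha> \<nu> (Y i)))"
  proof (rule sum.cong[OF refl])
    fix i assume "i \<in> {..<n}"
    then have \<beta>\<^sub>i: "\<forall>k<K. \<beta> i k > 0" and y: "Y i < K" using \<beta> Y by auto
    then have "(\<integral>p. ln (cat_pmf K p (Y i)) \<partial>Dirichlet K (\<beta> i)) = (\<integral>p. ln (p (Y i)) \<partial>Dirichlet K (\<beta> i))"
      by (simp add: cat_pmf_eq)
    then show "KL (Dirichlet K (\<beta> i)) (Dirichlet K (\<alpha>(Y i := \<alpha> (Y i) + \<nu>)))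
        = KL (Dirichlet K (\<beta> i)) (Dirichlet K \<alpha>)
          - \<nu> * (\<integral>p. ln (cat_pmf K p (Y i)) \<partial>Dirichlet K (\<beta> i))
          + ln (tempered_evidence K \<alpha> \<nu> (Y i))"
      using KL_Dirichlet_tempered_update[OF K \<beta>\<^sub>i \<alpha> \<nu> y] by simp
  qed
  finally show ?thesis
    by (simp add: sum.distrib)
qed

lemma is_arg_min_pos_affine_iff:
  fixes f g :: "'a \<Rightarrow> real"
  assumes "c > 0" and "\<And>x. P x \<Longrightarrow> f x = c * g x + d"
  shows "is_arg_min f P x \<longleftrightarrow> is_arg_min g P x"
  using assms by (auto simp: is_arg_min_linorder)

theorem theorem2p10:
  fixes K n :: nat and \<alpha> :: "nat \<Rightarrow> real" and \<nu> :: real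
    and Y :: "nat \<Rightarrow> nat" and X :: "nat \<Rightarrow> real ^ 'd"
    and NN :: "'phi \<Rightarrow> real ^ 'd \<Rightarrow> nat \<Rightarrow> real" and \<Phi> :: "'phi set" and \<phi>_hat :: 'phi
  assumes "K \<ge> 2"
    and "\<forall>k<K. \<alpha> k > 0"
    and "\<nu> > 0"
    and "\<forall>i<n. Y i < K"
    and "\<forall>\<phi>\<in>\<Phi>. \<forall>x. \<forall>k<K. NN \<phi> x k \<ge> 0"
    and "\<phi>_hat \<in> \<Phi>"
  shows "is_arg_min (\<lambda>\<phi>. KL (mean_field K \<alpha> NN n X \<phi>) (tempered_posterior K \<alpha> \<nu> n Y))
            (\<lambda>\<phi>. \<phi> \<in> \<Phi>) \<phi>_hat
         \<longleftrightarrow> is_arg_min (edl_loss K \<alpha> NN (1 / \<nu>) n Y X) (\<lambda>\<phi>. \<phi> \<in> \<Phi>) \<phi>_hat"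
proof (rule is_arg_min_pos_affine_iff)
  show "\<nu> > 0" by fact
  fix \<phi> assume "\<phi> \<in> \<Phi>"
  then have "\<forall>i<n. \<forall>k<K. \<alpha> k + NN \<phi> (X i) k > 0"
    using assms(2,5) by (simp add: add_pos_nonneg)
  then show "KL (mean_field K \<alpha> NN n X \<phi>) (tempered_posterior K \<alpha> \<nu> n Y)
      = \<nu> * edl_loss K \<alpha> NN (1 / \<nu>) n Y X \<phi> + (\<Sum>i<n. ln (tempered_evidence K \<alpha> \<nu> (Y i)))"
    using KL_PiM_Dirichlet_tempered_posterior[of K \<alpha> \<nu> n Y] assms(1-4)
    by (simp add: mean_field_def edl_loss_def sum_subtractf sum_negf sum_distrib_left algebra_simps)
qed

end
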